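(* Let $\alpha,\beta,\lambda,\varepsilon_1,\varepsilon_2$ be positive real numbers and consider the planar system $$s'=s\big(\varepsilon_2-\beta-\varepsilon_2 s+(\varepsilon_1-\varepsilon_2-\lambda)i\big),\qquad i'=i\big(\varepsilon_2-\varepsilon_1-\alpha+(\lambda-\varepsilon_2)s+(\varepsilon_1-\varepsilon_2)i\big)$$ on $D_1=\{(s,i): s\ge0,\ i\ge0,\ s+i\le1\}$, with interior $\overset{o}{D}_1$. Define $$T_0=\varepsilon_2-\beta,\quad T_1=\varepsilon_2-\varepsilon_1-\alpha,\quad T_2=\varepsilon_2-\beta+\frac{(\varepsilon_1-\varepsilon_2-\lambda)(\varepsilon_2-\varepsilon_1-\alpha)}{\varepsilon_2-\varepsilon_1},\quad T_3=\varepsilon_2-\varepsilon_1-\alpha-\frac{(\varepsilon_2-\lambda)(\varepsilon_2-\beta)}{\varepsilon_2}.$$ If $T_0>0$, $T_1>0$, $T_2<0$ and $T_3<0$, then the system has a saddle point in $\overset{o}{D}_1$.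
   Context: Note $T_1>0$ implies $\varepsilon_2\neq\varepsilon_1$, so $T_2$ is defined. A saddle point is a rest point at which some eigenvalues of the linearization have positive real parts and the others negative real parts. This is the special case $b=\beta_1=\gamma=0$ (with $\beta=\beta_2$) of the SIRS proportions system reduced to the $(s,i)$-plane. *)

theory Defs
  imports "HOL-Analysis.Analysis"
begin

definition D1 :: "(real \<times> real) set" where
  "D1 = {(s, i). s \<ge> 0 \<and> i \<ge> 0 \<and> s + i \<le> 1}"

definition sys_field :: "real \<Rightarrow> real \<Rightarrow> real \<Rightarrow> real \<Rightarrow> real \<Rightarrow> real \<times> real \<Rightarrow> real \<times> real" where
  "sys_field \<alpha> \<beta> lam \<epsilon>1 \<epsilon>2 = (\<lambda>(s, i).
     (s * (\<epsilon>2 - \<beta> - \<epsilon>2 * s + (\<epsilon>1 - \<epsilon>2 - lam) * i),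
      i * (\<epsilon>2 - \<epsilon>1 - \<alpha> + (lam - \<epsilon>2) * s + (\<epsilon>1 - \<epsilon>2) * i)))"

text \<open>z is an eigenvalue (over the complex numbers) of the linear map L on R^2:
  det (M - z I) = 0, where M is the matrix of L in the standard basis.\<close>
definition lin_eigenvalue :: "(real \<times> real \<Rightarrow> real \<times> real) \<Rightarrow> complex \<Rightarrow> bool" where
  "lin_eigenvalue L z \<longleftrightarrow>
     (let a = fst (L (1, 0)); c = snd (L (1, 0)); b = fst (L (0, 1)); d = snd (L (0, 1))
      in (complex_of_real a - z) * (complex_of_real d - z) - complex_of_real b * complex_of_real c = 0)"

definition saddle_point :: "(real \<times> real \<Rightarrow> real \<times> real) \<Rightarrow> real \<times> real \<Rightarrow> bool" where
  "saddle_point F p \<longleftrightarrow> F p = (0, 0) \<and>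
     (\<exists>L. (F has_derivative L) (at p) \<and>
        (\<forall>z. lin_eigenvalue L z \<longrightarrow> Re z \<noteq> 0) \<and>
        (\<exists>z. lin_eigenvalue L z \<and> Re z > 0) \<and>
        (\<exists>z. lin_eigenvalue L z \<and> Re z < 0))"

end

theory Submission
  imports Defs
begin

text \<open>The system is a competitive Lotka--Volterra system
  \<open>s' = s (T\<^sub>0 - a s - b i)\<close>, \<open>i' = i (T\<^sub>1 - c s - d i)\<close> with \<open>a = \<epsilon>\<^sub>2\<close>, \<open>b = \<epsilon>\<^sub>2 + \<lambda> - \<epsilon>\<^sub>1\<close>,
  \<open>c = \<epsilon>\<^sub>2 - \<lambda>\<close>, \<open>d = \<epsilon>\<^sub>2 - \<epsilon>\<^sub>1\<close>; the hypotheses \<open>T\<^sub>2 < 0\<close> and \<open>T\<^sub>3 < 0\<close> read \<open>T\<^sub>0 d < b T\<^sub>1\<close> and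
  \<open>a T\<^sub>1 < c T\<^sub>0\<close>. Together with \<open>T\<^sub>0, T\<^sub>1 > 0\<close> they force \<open>a d < b c\<close> and a coexistence
  equilibrium with positive coordinates, and subtracting its two defining equations gives
  \<open>\<lambda> (s + i) = T\<^sub>0 - T\<^sub>1 < \<lambda>\<close>. At an interior equilibrium the Jacobian is
  \<open>-diag(s, i)\<close> times the interaction matrix, so its determinant \<open>s i (a d - b c)\<close> is negative:
  the eigenvalues are real of opposite signs.\<close>

definition competition_field ::
    "real \<Rightarrow> real \<Rightarrow> real \<Rightarrow> real \<Rightarrow> real \<Rightarrow> real \<Rightarrow> real \<times> real \<Rightarrow> real \<times> real" where
  "competition_field T0 T1 a b c d =
     (\<lambda>(s, i). (s * (T0 - a * s - b * i), i * (T1 - c * s - d * i)))"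

lemma sys_field_eq_competition_field:
  "sys_field \<alpha> \<beta> lam \<epsilon>1 \<epsilon>2 =
     competition_field (\<epsilon>2 - \<beta>) (\<epsilon>2 - \<epsilon>1 - \<alpha>) \<epsilon>2 (\<epsilon>2 + lam - \<epsilon>1) (\<epsilon>2 - lam) (\<epsilon>2 - \<epsilon>1)"
  by (auto simp: sys_field_def competition_field_def fun_eq_iff algebra_simps)

lemma lin_eigenvalue_linear_map:
  "lin_eigenvalue (\<lambda>(x, y). (A * x + B * y, C * x + D * y)) z \<longleftrightarrow>
     (of_real A - z) * (of_real D - z) - of_real B * of_real C = 0"
  by (simp add: lin_eigenvalue_def)

lemma lin_eigenvalue_Re_nonzero:
  assumes "A * D - B * C < 0" and "lin_eigenvalue (\<lambda>(x, y). (A * x + B * y, C * x + D * y)) z"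
  shows "Re z \<noteq> 0"
proof
  assume "Re z = 0"
  moreover have "Re ((of_real A - z) * (of_real D - z) - of_real B * of_real C) = 0"
    using assms(2) by (simp add: lin_eigenvalue_linear_map)
  ultimately have "A * D - B * C = (Im z)\<^sup>2"
    by (simp add: power2_eq_square)
  with assms(1) show False
    by (metis zero_le_power2 not_le)
qed

lemma lin_eigenvalues_opposite_signs:
  assumes det: "A * D - B * C < 0"
  defines "L \<equiv> \<lambda>(x, y). (A * x + B * y, C * x + D * y)"
  shows "\<exists>z. lin_eigenvalue L z \<and> Re z > 0" and "\<exists>z. lin_eigenvalue L z \<and> Re z < 0"
proof -
  define q where "q = sqrt ((A + D)\<^sup>2 - 4 * (A * D - B * C))"
  have discr_nonneg: "0 \<le> (A + D)\<^sup>2 - 4 * (A * D - B * C)"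
    using det by (smt (verit) zero_le_power2)
  then have q_sq: "q\<^sup>2 = (A + D)\<^sup>2 - 4 * (A * D - B * C)" and "q \<ge> 0"
    by (simp_all add: q_def)
  have q_gt: "\<bar>A + D\<bar> < q"
  proof (rule power_less_imp_less_base[of _ 2])
    show "\<bar>A + D\<bar>\<^sup>2 < q\<^sup>2"
      using det by (simp add: q_sq)
  qed fact
  have root: "lin_eigenvalue L (of_real r)" if "r = (A + D + q) / 2 \<or> r = (A + D - q) / 2" for r
  proof -
    have "(A - r) * (D - r) - B * C = (q\<^sup>2 - ((A + D)\<^sup>2 - 4 * (A * D - B * C))) / 4"
      using that by (elim disjE; hypsubst; simp add: field_simps power2_eq_square)
    then have "(A - r) * (D - r) - B * C = 0"
      by (simp add: q_sq)
    then have "complex_of_real ((A - r) * (D - r) - B * C) = 0"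
      by simp
    then show ?thesis
      unfolding L_def lin_eigenvalue_linear_map by simp
  qed
  show "\<exists>z. lin_eigenvalue L z \<and> Re z > 0"
    using root[of "(A + D + q) / 2"] q_gt by (intro exI[of _ "of_real ((A + D + q) / 2)"]) auto
  show "\<exists>z. lin_eigenvalue L z \<and> Re z < 0"
    using root[of "(A + D - q) / 2"] q_gt by (intro exI[of _ "of_real ((A + D - q) / 2)"]) auto
qed

lemma competition_field_has_derivative:
  "(competition_field T0 T1 a b c d has_derivative
     (\<lambda>(x, y). ((T0 - 2 * a * s - b * i) * x + (- b * s) * y,
                (- c * i) * x + (T1 - c * s - 2 * d * i) * y))) (at (s, i))"
proof -
  let ?F = "\<lambda>p. (fst p * (T0 - a * fst p - b * snd p), snd p * (T1 - c * fst p - d * snd p))"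
  have "(?F has_derivative
     (\<lambda>h. (s * (0 - a * fst h - b * snd h) + fst h * (T0 - a * s - b * i),
           i * (0 - c * fst h - d * snd h) + snd h * (T1 - c * s - d * i)))) (at (s, i))"
    by (auto intro!: derivative_eq_intros)
  moreover have "?F = competition_field T0 T1 a b c d"
    by (auto simp: competition_field_def)
  ultimately show ?thesis
    by (simp add: case_prod_unfold algebra_simps)
qed

lemma saddle_point_competition_field:
  assumes "s > 0" "i > 0" and equilibrium: "a * s + b * i = T0" "c * s + d * i = T1"
    and "a * d < b * c"
  shows "saddle_point (competition_field T0 T1 a b c d) (s, i)"
proof -
  let ?L = "\<lambda>(x, y). ((- a * s) * x + (- b * s) * y, (- c * i) * x + (- d * i) * y)"
  have rest: "competition_field T0 T1 a b c d (s, i) = (0, 0)"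
    by (simp add: competition_field_def equilibrium[symmetric])
  have "(competition_field T0 T1 a b c d has_derivative ?L) (at (s, i))"
    using competition_field_has_derivative[of T0 T1 a b c d s i]
    by (simp add: equilibrium[symmetric] algebra_simps)
  moreover have det: "(- a * s) * (- d * i) - (- b * s) * (- c * i) < 0"
  proof -
    have "(- a * s) * (- d * i) - (- b * s) * (- c * i) = (s * i) * (a * d - b * c)"
      by (simp add: algebra_simps)
    also have "\<dots> < 0"
      using assms by (simp add: mult_pos_neg)
    finally show ?thesis .
  qed
  ultimately show ?thesis
    unfolding saddle_point_def
    using rest lin_eigenvalue_Re_nonzero[OF det] lin_eigenvalues_opposite_signs[OF det] by blast
qed

lemma competition_coexistence_equilibrium:
  fixes T0 T1 a b c d :: real
  assumes "a > 0" "d > 0" "T0 > 0" "T1 > 0" and "T0 * d < b * T1" "a * T1 < c * T0"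
  obtains s i where "s > 0" "i > 0" "a * s + b * i = T0" "c * s + d * i = T1" "a * d < b * c"
proof -
  have "b > 0" "c > 0"
    using assms by (smt (verit) mult_pos_pos mult_nonpos_nonneg)+
  have "T0 * d * (a * T1) < b * T1 * (a * T1)"
    using assms by (intro mult_strict_right_mono) auto
  also have "\<dots> < b * T1 * (c * T0)"
    using assms \<open>b > 0\<close> by (intro mult_strict_left_mono) auto
  finally have "(T0 * T1) * (a * d) < (T0 * T1) * (b * c)"
    by (simp add: algebra_simps)
  then have det: "a * d < b * c"
    using assms by (simp add: mult_less_cancel_left_pos)
  define \<Delta> where "\<Delta> = a * d - b * c"
  have "\<Delta> < 0"
    using det by (simp add: \<Delta>_def)
  show thesis
  proof
    show "(T0 * d - b * T1) / \<Delta> > 0" "(a * T1 - c * T0) / \<Delta> > 0"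
      using assms \<open>\<Delta> < 0\<close> by (simp_all add: divide_neg_neg)
    show "a * ((T0 * d - b * T1) / \<Delta>) + b * ((a * T1 - c * T0) / \<Delta>) = T0"
      "c * ((T0 * d - b * T1) / \<Delta>) + d * ((a * T1 - c * T0) / \<Delta>) = T1"
      using \<open>\<Delta> < 0\<close> by (simp_all add: field_simps) (simp_all add: \<Delta>_def algebra_simps)
  qed (fact det)
qed

lemma mem_interior_D1:
  assumes "s > 0" "i > 0" "s + i < 1"
  shows "(s, i) \<in> interior D1"
proof (rule interiorI)
  let ?U = "{p :: real \<times> real. 0 < fst p \<and> 0 < snd p \<and> fst p + snd p < 1}"
  show "open ?U"
    by (intro open_Collect_conj open_Collect_less continuous_intros)
  show "?U \<subseteq> D1"
    by (auto simp: D1_def)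
  show "(s, i) \<in> ?U"
    using assms by simp
qed

theorem proposition3p2:
  fixes \<alpha> \<beta> lam \<epsilon>1 \<epsilon>2 :: real
  assumes "\<alpha> > 0" "\<beta> > 0" "lam > 0" "\<epsilon>1 > 0" "\<epsilon>2 > 0"
    and "\<epsilon>2 - \<beta> > 0"
    and "\<epsilon>2 - \<epsilon>1 - \<alpha> > 0"
    and "\<epsilon>2 - \<beta> + (\<epsilon>1 - \<epsilon>2 - lam) * (\<epsilon>2 - \<epsilon>1 - \<alpha>) / (\<epsilon>2 - \<epsilon>1) < 0"
    and "\<epsilon>2 - \<epsilon>1 - \<alpha> - (\<epsilon>2 - lam) * (\<epsilon>2 - \<beta>) / \<epsilon>2 < 0"
  shows "\<exists>p \<in> interior D1. saddle_point (sys_field \<alpha> \<beta> lam \<epsilon>1 \<epsilon>2) p"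
proof -
  define T0 T1 b c d where "T0 = \<epsilon>2 - \<beta>" and "T1 = \<epsilon>2 - \<epsilon>1 - \<alpha>"
    and "b = \<epsilon>2 + lam - \<epsilon>1" and "c = \<epsilon>2 - lam" and "d = \<epsilon>2 - \<epsilon>1"
  have "d > T1" "T1 > 0"
    using assms by (simp_all add: T1_def d_def)
  have T2_neg: "T0 * d < b * T1"
    using assms(8) \<open>d > T1\<close> \<open>T1 > 0\<close>
    by (simp add: T0_def T1_def b_def d_def field_simps)
  have T3_neg: "\<epsilon>2 * T1 < c * T0"
    using assms(5,9) by (simp add: T0_def T1_def c_def field_simps)
  obtain s i where "s > 0" "i > 0" and equilibrium: "\<epsilon>2 * s + b * i = T0" "c * s + d * i = T1"
    and "\<epsilon>2 * d < b * c"
    using competition_coexistence_equilibrium[OF assms(5) _ _ _ T2_neg T3_neg] assms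
    by (auto simp: T0_def T1_def d_def)
  have "lam * (s + i) = T0 - T1"
    using equilibrium by (simp add: b_def c_def d_def algebra_simps)
  moreover have "T0 - T1 < lam"
  proof -
    have "d * (T0 - T1) < lam * T1"
      using T2_neg by (simp add: b_def d_def algebra_simps)
    also have "\<dots> < d * lam"
      using \<open>d > T1\<close> assms(3) by (simp add: mult.commute)
    finally show ?thesis
      using \<open>d > T1\<close> \<open>T1 > 0\<close> by (simp add: mult_less_cancel_left_pos)
  qed
  ultimately have "s + i < 1"
    using assms(3) by (metis mult_less_cancel_left_pos mult_1_right)
  have "saddle_point (competition_field T0 T1 \<epsilon>2 b c d) (s, i)"
    using \<open>s > 0\<close> \<open>i > 0\<close> equilibrium \<open>\<epsilon>2 * d < b * c\<close> by (rule saddle_point_competition_field)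
  then have "saddle_point (sys_field \<alpha> \<beta> lam \<epsilon>1 \<epsilon>2) (s, i)"
    by (simp add: sys_field_eq_competition_field T0_def T1_def b_def c_def d_def)
  with mem_interior_D1[OF \<open>s > 0\<close> \<open>i > 0\<close> \<open>s + i < 1\<close>] show ?thesis
    by blast
qed

end
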